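(* Let $\mu\in(0,1)$ and $\beta(a)=\frac{\mu}{1+a}$. Let $W(\tau,b)=C(\tau)(1-b)^{\mu-1}(1+e^{\tau}b)^{-\mu}$ for $\tau\ge0$, $b\in[0,1)$, with $C(\tau)>0$ such that $\int_0^1W(\tau,b)db=1$, let $\delta(\tau)=\frac{C'(\tau)}{C(\tau)^2}-\frac{\mu}{C(\tau)}$, $c(\tau)=e^{-\mu\tau}C(\tau)$, and $c_\infty=\lim_{\tau\to\infty}c(\tau)$ (which exists since $c$ is decreasing). Then for all $\tau\ge0$, $$-4e^{-(1-\mu)\tau}\le C(\tau)\delta(\tau)\le-\frac{c_\infty}{1+e^{-\tau}}e^{-(1-\mu)\tau}\le0.$$ *)

theory Defs
  imports "HOL-Analysis.Analysis"
begin

definition Wdens :: "real \<Rightarrow> real \<Rightarrow> real \<Rightarrow> real" where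
  "Wdens \<mu> \<tau> b = (1 - b) powr (\<mu> - 1) * (1 + exp \<tau> * b) powr (- \<mu>)"

definition Cn :: "real \<Rightarrow> real \<Rightarrow> real" where
  "Cn \<mu> \<tau> = 1 / integral {0..1} (Wdens \<mu> \<tau>)"

definition W :: "real \<Rightarrow> real \<Rightarrow> real \<Rightarrow> real" where
  "W \<mu> \<tau> b = Cn \<mu> \<tau> * Wdens \<mu> \<tau> b"

definition delta :: "real \<Rightarrow> real \<Rightarrow> real" where
  "delta \<mu> \<tau> = deriv (Cn \<mu>) \<tau> / (Cn \<mu> \<tau>)\<^sup>2 - \<mu> / Cn \<mu> \<tau>"

definition csmall :: "real \<Rightarrow> real \<Rightarrow> real" where
  "csmall \<mu> \<tau> = exp (- \<mu> * \<tau>) * Cn \<mu> \<tau>"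

definition cinf :: "real \<Rightarrow> real" where
  "cinf \<mu> = Lim at_top (csmall \<mu>)"

end

theory Submission
  imports Defs
begin

text \<open>
  The substitution u = (1 - b)^\<mu> turns the normalising integral into
  J(\<tau>) = \<integral> B(\<tau>,u)^(-\<mu>) du over [0,1], with B(\<tau>,u) = 1 + e^\<tau> (1 - u^(1/\<mu>)), so C = \<mu> / J.
  Since dB/d\<tau> = B - 1, differentiating under the integral gives J' = \<mu> (\<integral> B^(-\<mu>-1) du - J),
  and d/du (u B^(-\<mu>)) = (1 + e^\<tau>) B^(-\<mu>-1) evaluates \<integral> B^(-\<mu>-1) du = 1 / (1 + e^\<tau>).
  Hence \<delta> = -1 / (1 + e^\<tau>) exactly and C \<delta> = -C / (1 + e^\<tau>). The lower bound follows from
  B \<le> 1 + e^\<tau>, i.e. C \<le> \<mu> (1 + e^\<tau>)^\<mu>; the upper bound from c(\<infinity>) \<le> c(\<tau>), as c decreases: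
  e^(\<mu>\<tau>) B^(-\<mu>) = (e^(-\<tau>) + 1 - u^(1/\<mu>))^(-\<mu>) increases with \<tau>.
\<close>

definition subst_base :: "real \<Rightarrow> real \<Rightarrow> real \<Rightarrow> real" where
  "subst_base \<mu> \<tau> u = 1 + exp \<tau> * (1 - u powr (1 / \<mu>))"

lemma subst_base_bounds:
  assumes "0 < \<mu>" "u \<in> {0..1}"
  shows "1 \<le> subst_base \<mu> \<tau> u" "0 < subst_base \<mu> \<tau> u" "subst_base \<mu> \<tau> u \<le> 1 + exp \<tau>"
proof -
  have "0 \<le> u powr (1 / \<mu>)" "u powr (1 / \<mu>) \<le> 1"
    using assms by (auto intro!: powr_le1)
  then show "1 \<le> subst_base \<mu> \<tau> u" "0 < subst_base \<mu> \<tau> u" "subst_base \<mu> \<tau> u \<le> 1 + exp \<tau>"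
    by (auto simp: subst_base_def add_pos_nonneg)
qed

lemma continuous_on_subst_base:
  assumes "0 < \<mu>"
  shows "continuous_on (A \<times> {0..1}) (\<lambda>(\<tau>, u). subst_base \<mu> \<tau> u)"
proof -
  have "continuous_on (A \<times> {0..1}) (\<lambda>p::real \<times> real. snd p powr (1 / \<mu>))"
    by (rule continuous_on_powr') (use assms in \<open>auto intro: continuous_intros\<close>)
  from continuous_on_add[OF continuous_on_const
      continuous_on_mult[OF continuous_on_exp[OF continuous_on_fst[OF continuous_on_id]]
        continuous_on_diff[OF continuous_on_const this]]]
  show ?thesis
    unfolding subst_base_def case_prod_beta .
qed

lemma continuous_on_subst_base_powr:
  assumes "0 < \<mu>"
  shows "continuous_on (A \<times> {0..1}) (\<lambda>(\<tau>, u). subst_base \<mu> \<tau> u powr a)"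
proof -
  have "continuous_on (A \<times> {0..1}) (\<lambda>p. (\<lambda>(\<tau>, u). subst_base \<mu> \<tau> u) p powr a)"
    by (rule continuous_on_powr'[OF continuous_on_subst_base[OF assms] continuous_on_const])
      (clarsimp, metis subst_base_bounds(2)[OF assms] atLeastAtMost_iff less_imp_le less_irrefl)
  then show ?thesis
    by (simp add: case_prod_beta)
qed

lemma continuous_on_subst_base_powr_slice:
  assumes "0 < \<mu>"
  shows "continuous_on {0..1} (\<lambda>u. subst_base \<mu> \<tau> u powr a)"
  by (rule continuous_on_compose2[OF continuous_on_subst_base_powr[OF assms, where A="{\<tau>}"],
      where f="\<lambda>u. (\<tau>, u)", simplified]) (auto intro: continuous_intros)

lemma has_field_derivative_subst_base_tau:
  "((\<lambda>\<tau>. subst_base \<mu> \<tau> u) has_field_derivative subst_base \<mu> \<tau> u - 1) (at \<tau> within A)"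
  unfolding subst_base_def by (auto intro!: derivative_eq_intros)

lemma has_field_derivative_subst_base_u:
  assumes "0 < u"
  shows "((\<lambda>u. subst_base \<mu> \<tau> u) has_field_derivative - exp \<tau> / \<mu> * u powr (1 / \<mu> - 1)) (at u)"
  unfolding subst_base_def using assms
  by (auto intro!: derivative_eq_intros simp: field_simps)

lemma Wdens_eq_subst:
  assumes "0 < \<mu>" "b \<in> {0..1}"
  shows "Wdens \<mu> \<tau> b = (1 - b) powr (\<mu> - 1) * subst_base \<mu> \<tau> ((1 - b) powr \<mu>) powr - \<mu>"
proof (cases "b = 1")
  case False
  then have "((1 - b) powr \<mu>) powr (1 / \<mu>) = 1 - b"
    using assms by (simp add: powr_powr)
  then show ?thesis
    by (simp add: Wdens_def subst_base_def)
qed (simp add: Wdens_def)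

lemma Wdens_has_integral:
  assumes "0 < \<mu>"
  shows "(Wdens \<mu> \<tau> has_integral integral {0..1} (\<lambda>u. subst_base \<mu> \<tau> u powr - \<mu>) / \<mu>) {0..1}"
proof -
  let ?g = "\<lambda>b::real. (1 - b) powr \<mu>"
  let ?f = "\<lambda>u. subst_base \<mu> \<tau> u powr - \<mu>"
  have "((\<lambda>b. - (\<mu> * (1 - b) powr (\<mu> - 1)) *\<^sub>R ?f (?g b)) has_integral
      integral {?g 0..?g 1} ?f - integral {?g 1..?g 0} ?f) {0..1}"
  proof (rule has_integral_substitution_general[where s="{1}" and c=0 and d=1])
    show "?g ` {0..1} \<subseteq> {0..1}"
      using assms by (auto intro!: powr_le1)
    show "continuous_on {0..1} ?g"
      by (rule continuous_on_powr') (use assms in \<open>auto intro: continuous_intros\<close>)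
    fix b :: real
    assume "b \<in> {0..1} - {1}"
    then have "0 < 1 - b" by auto
    then show "(?g has_field_derivative - (\<mu> * (1 - b) powr (\<mu> - 1))) (at b within {0..1})"
      by (auto intro!: derivative_eq_intros)
  qed (use continuous_on_subst_base_powr_slice[OF assms] in auto)
  then have "((\<lambda>b. - (\<mu> * (1 - b) powr (\<mu> - 1) * ?f (?g b))) has_integral - integral {0..1} ?f) {0..1}"
    using assms by simp
  from has_integral_mult_right[OF this, of "- 1 / \<mu>"]
  have "(Wdens \<mu> \<tau> has_integral - 1 / \<mu> * - integral {0..1} ?f) {0..1}"
    by (rule has_integral_cong[THEN iffD1, rotated]) (use assms in \<open>simp add: Wdens_eq_subst\<close>)
  then show ?thesis
    by simp
qed

definition subst_integral :: "real \<Rightarrow> real \<Rightarrow> real" where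
  "subst_integral \<mu> \<tau> = integral {0..1} (\<lambda>u. subst_base \<mu> \<tau> u powr - \<mu>)"

lemma Cn_eq_subst_integral:
  assumes "0 < \<mu>"
  shows "Cn \<mu> \<tau> = \<mu> / subst_integral \<mu> \<tau>"
  using integral_unique[OF Wdens_has_integral[OF assms]] by (simp add: Cn_def subst_integral_def)

lemma subst_integral_ge:
  assumes "0 < \<mu>"
  shows "(1 + exp \<tau>) powr - \<mu> \<le> subst_integral \<mu> \<tau>"
proof -
  have "integral {0..1} (\<lambda>_::real. (1 + exp \<tau>) powr - \<mu>) \<le> subst_integral \<mu> \<tau>"
    unfolding subst_integral_def
  proof (rule integral_le)
    show "(\<lambda>u. subst_base \<mu> \<tau> u powr - \<mu>) integrable_on {0..1}"
      by (rule integrable_continuous_interval[OF continuous_on_subst_base_powr_slice[OF assms]])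
    fix u :: real
    assume "u \<in> {0..1}"
    then show "(1 + exp \<tau>) powr - \<mu> \<le> subst_base \<mu> \<tau> u powr - \<mu>"
      using assms subst_base_bounds by (auto intro: powr_mono2')
  qed auto
  then show ?thesis
    by simp
qed

lemma subst_integral_pos:
  assumes "0 < \<mu>"
  shows "0 < subst_integral \<mu> \<tau>"
  using subst_integral_ge[OF assms, of \<tau>] powr_gt_zero[of "1 + exp \<tau>" "- \<mu>"] exp_gt_zero[of \<tau>]
  by linarith

lemma Cn_le:
  assumes "0 < \<mu>"
  shows "Cn \<mu> \<tau> \<le> \<mu> * (1 + exp \<tau>) powr \<mu>"
proof -
  have "0 < (1 + exp \<tau>) powr - \<mu>"
    by (simp add: add_pos_pos order.strict_implies_not_eq[symmetric])
  then have "Cn \<mu> \<tau> \<le> \<mu> / (1 + exp \<tau>) powr - \<mu>"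
    unfolding Cn_eq_subst_integral[OF assms]
    by (intro divide_left_mono subst_integral_ge) (use assms subst_integral_pos in auto)
  then show ?thesis
    by (simp add: powr_minus divide_inverse)
qed

lemma subst_base_powr_has_integral:
  assumes "0 < \<mu>"
  shows "((\<lambda>u. subst_base \<mu> \<tau> u powr (- \<mu> - 1)) has_integral 1 / (1 + exp \<tau>)) {0..1}"
proof -
  let ?B = "subst_base \<mu> \<tau>"
  let ?G = "\<lambda>u. u * ?B u powr - \<mu>"
  have "(?G has_real_derivative (1 + exp \<tau>) * ?B u powr (- \<mu> - 1)) (at u)"
    if u: "u \<in> {0<..<1}" for u
  proof -
    have B: "0 < ?B u"
      using subst_base_bounds(2)[OF assms] u by auto
    have "(?G has_real_derivative 1 * ?B u powr - \<mu> +
        (- \<mu> * ?B u powr (- \<mu> - of_nat 1) * (- exp \<tau> / \<mu> * u powr (1 / \<mu> - 1))) * u) (at u)"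
      by (intro DERIV_mult DERIV_ident DERIV_fun_powr has_field_derivative_subst_base_u B)
        (use u in auto)
    moreover
    have "?B u powr - \<mu> = ?B u * ?B u powr (- \<mu> - 1)"
      using B by (simp add: powr_diff powr_minus field_simps)
    moreover have "u powr (1 / \<mu> - 1) = u powr (1 / \<mu>) / u"
      using u by (simp add: powr_diff)
    ultimately show ?thesis
      using assms u by (elim DERIV_cong) (simp only: of_nat_1, simp add: subst_base_def field_simps)
  qed
  then have "((\<lambda>u. (1 + exp \<tau>) * ?B u powr (- \<mu> - 1)) has_integral ?G 1 - ?G 0) {0..1}"
    by (intro fundamental_theorem_of_calculus_interior continuous_intros
        continuous_on_subst_base_powr_slice assms)
      (auto simp: has_real_derivative_iff_has_vector_derivative)
  from has_integral_mult_right[OF this, of "1 / (1 + exp \<tau>)"] show ?thesis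
    by (simp add: subst_base_def add_pos_pos order.strict_implies_not_eq[symmetric])
qed

lemma has_field_derivative_subst_integral:
  assumes "0 < \<mu>"
  shows "(subst_integral \<mu> has_field_derivative \<mu> * (1 / (1 + exp \<tau>) - subst_integral \<mu> \<tau>)) (at \<tau>)"
proof -
  let ?dB = "\<lambda>\<tau> u. - \<mu> * (subst_base \<mu> \<tau> u powr - \<mu> - subst_base \<mu> \<tau> u powr (- \<mu> - 1))"
  have "((\<lambda>\<tau>. integral (cbox 0 1) (\<lambda>u. subst_base \<mu> \<tau> u powr - \<mu>)) has_field_derivative
      integral (cbox 0 1) (?dB \<tau>)) (at \<tau> within UNIV)"
  proof (rule leibniz_rule_field_derivative)
    fix \<tau>' u :: real
    assume "u \<in> cbox 0 1"
    then have B: "0 < subst_base \<mu> \<tau>' u"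
      using subst_base_bounds(2)[OF assms] by auto
    have "((\<lambda>\<tau>. subst_base \<mu> \<tau> u powr - \<mu>) has_field_derivative
        - \<mu> * subst_base \<mu> \<tau>' u powr (- \<mu> - of_nat 1) * (subst_base \<mu> \<tau>' u - 1)) (at \<tau>')"
      by (intro DERIV_fun_powr has_field_derivative_subst_base_tau B)
    moreover have "subst_base \<mu> \<tau>' u powr - \<mu> = subst_base \<mu> \<tau>' u * subst_base \<mu> \<tau>' u powr (- \<mu> - 1)"
      using B by (simp add: powr_diff powr_minus field_simps)
    ultimately show "((\<lambda>\<tau>. subst_base \<mu> \<tau> u powr - \<mu>) has_field_derivative ?dB \<tau>' u) (at \<tau>' within UNIV)"
      by (elim DERIV_cong) (simp only: of_nat_1, simp add: algebra_simps)
  next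
    show "continuous_on (UNIV \<times> cbox 0 1) (\<lambda>(\<tau>, u). ?dB \<tau> u)"
      using continuous_on_mult[OF continuous_on_const continuous_on_diff[OF
          continuous_on_subst_base_powr[OF assms, of UNIV "- \<mu>"]
          continuous_on_subst_base_powr[OF assms, of UNIV "- \<mu> - 1"]], of "- \<mu>"]
      by (simp add: case_prod_beta)
  qed (use integrable_continuous_interval[OF continuous_on_subst_base_powr_slice[OF assms]] in auto)
  moreover have "integral {0..1} (?dB \<tau>) = \<mu> * (1 / (1 + exp \<tau>) - subst_integral \<mu> \<tau>)"
  proof -
    note integrable = integrable_continuous_interval[OF continuous_on_subst_base_powr_slice[OF assms]]
    have "integral {0..1} (?dB \<tau>) = - \<mu> * (subst_integral \<mu> \<tau> -
        integral {0..1} (\<lambda>u. subst_base \<mu> \<tau> u powr (- \<mu> - 1)))"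
      unfolding subst_integral_def by (simp only: integral_mult_right integral_diff[OF integrable integrable])
    then show ?thesis
      by (simp add: integral_unique[OF subst_base_powr_has_integral[OF assms]] algebra_simps)
  qed
  ultimately show ?thesis
    by (simp add: subst_integral_def[abs_def])
qed

lemma delta_eq:
  assumes "0 < \<mu>"
  shows "delta \<mu> \<tau> = - 1 / (1 + exp \<tau>)"
proof -
  let ?J = "subst_integral \<mu>"
  have "deriv (Cn \<mu>) \<tau> = - (\<mu> * (\<mu> * (1 / (1 + exp \<tau>) - ?J \<tau>))) / (?J \<tau>)\<^sup>2"
    unfolding Cn_eq_subst_integral[OF assms, abs_def]
    using has_field_derivative_subst_integral[OF assms] subst_integral_pos[OF assms, of \<tau>]
    by (intro DERIV_imp_deriv) (auto intro!: derivative_eq_intros simp: power2_eq_square)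
  then show ?thesis
    unfolding delta_def Cn_eq_subst_integral[OF assms]
    using assms subst_integral_pos[OF assms, of \<tau>]
    by (simp add: field_simps power2_eq_square)
qed

lemma exp_mult_subst_base_powr_mono:
  assumes "0 < \<mu>" "u \<in> {0..1}" "\<tau>\<^sub>1 \<le> \<tau>\<^sub>2"
  shows "exp (\<mu> * \<tau>\<^sub>1) * subst_base \<mu> \<tau>\<^sub>1 u powr - \<mu> \<le> exp (\<mu> * \<tau>\<^sub>2) * subst_base \<mu> \<tau>\<^sub>2 u powr - \<mu>"
proof -
  define x where "x = 1 - u powr (1 / \<mu>)"
  have "0 \<le> x"
    using assms by (auto simp: x_def intro!: powr_le1)
  have scaled: "exp (\<mu> * \<tau>) * subst_base \<mu> \<tau> u powr - \<mu> = (exp (- \<tau>) + x) powr - \<mu>" for \<tau>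
  proof -
    have "subst_base \<mu> \<tau> u = exp \<tau> * (exp (- \<tau>) + x)"
      by (simp add: subst_base_def x_def field_simps exp_minus)
    then have "subst_base \<mu> \<tau> u powr - \<mu> = exp \<tau> powr - \<mu> * (exp (- \<tau>) + x) powr - \<mu>"
      using \<open>0 \<le> x\<close> by (simp add: powr_mult add_nonneg_nonneg)
    moreover have "exp \<tau> powr - \<mu> = exp (- (\<mu> * \<tau>))"
      by (simp add: powr_def)
    ultimately show ?thesis
      by (simp add: exp_minus)
  qed
  show ?thesis
    unfolding scaled using assms \<open>0 \<le> x\<close> by (intro powr_mono2') (auto intro: add_pos_nonneg)
qed

lemma csmall_eq:
  assumes "0 < \<mu>"
  shows "csmall \<mu> \<tau> = \<mu> / integral {0..1} (\<lambda>u. exp (\<mu> * \<tau>) * subst_base \<mu> \<tau> u powr - \<mu>)"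
  by (simp add: csmall_def Cn_eq_subst_integral[OF assms] subst_integral_def exp_minus field_simps)

lemma csmall_pos:
  assumes "0 < \<mu>"
  shows "0 < csmall \<mu> \<tau>"
  using assms subst_integral_pos[OF assms] by (simp add: csmall_def Cn_eq_subst_integral)

lemma antimono_csmall:
  assumes "0 < \<mu>"
  shows "antimono (csmall \<mu>)"
proof (rule antimonoI)
  fix \<tau>\<^sub>1 \<tau>\<^sub>2 :: real
  assume "\<tau>\<^sub>1 \<le> \<tau>\<^sub>2"
  let ?I = "\<lambda>\<tau>. integral {0..1} (\<lambda>u. exp (\<mu> * \<tau>) * subst_base \<mu> \<tau> u powr - \<mu>)"
  have pos: "0 < ?I \<tau>" for \<tau>
    using subst_integral_pos[OF assms, of \<tau>] by (simp add: subst_integral_def)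
  have "?I \<tau>\<^sub>1 \<le> ?I \<tau>\<^sub>2"
    by (intro integral_le integrable_continuous_interval continuous_intros
        continuous_on_subst_base_powr_slice exp_mult_subst_base_powr_mono assms \<open>\<tau>\<^sub>1 \<le> \<tau>\<^sub>2\<close>)
  then show "csmall \<mu> \<tau>\<^sub>2 \<le> csmall \<mu> \<tau>\<^sub>1"
    unfolding csmall_eq[OF assms] using assms pos by (intro divide_left_mono) auto
qed

lemma tendsto_Inf_at_top_antimono:
  fixes f :: "'a::linorder \<Rightarrow> 'b::{conditionally_complete_linorder, linorder_topology}"
  assumes "antimono f" "bdd_below (range f)"
  shows "(f \<longlongrightarrow> Inf (range f)) at_top"
proof (rule decreasing_tendsto)
  show "\<forall>\<^sub>F x in at_top. Inf (range f) \<le> f x"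
    using assms(2) by (intro always_eventually allI cInf_lower) auto
  fix y
  assume "Inf (range f) < y"
  then obtain x0 where "f x0 < y"
    using cInf_lessD[of "range f" y] by auto
  then show "\<forall>\<^sub>F x in at_top. f x < y"
    unfolding eventually_at_top_linorder using assms(1)
    by (auto dest: antimonoD intro: le_less_trans)
qed

lemma bdd_below_csmall:
  assumes "0 < \<mu>"
  shows "bdd_below (range (csmall \<mu>))"
  using csmall_pos[OF assms] by (auto intro!: bdd_belowI[of _ 0] less_imp_le)

lemma cinf_eq_Inf:
  assumes "0 < \<mu>"
  shows "cinf \<mu> = Inf (range (csmall \<mu>))"
  unfolding cinf_def
  by (intro tendsto_Lim tendsto_Inf_at_top_antimono antimono_csmall bdd_below_csmall assms) simp

lemma cinf_nonneg:
  assumes "0 < \<mu>"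
  shows "0 \<le> cinf \<mu>"
  unfolding cinf_eq_Inf[OF assms] using csmall_pos[OF assms] by (intro cInf_greatest) (auto intro: less_imp_le)

lemma cinf_le_csmall:
  assumes "0 < \<mu>"
  shows "cinf \<mu> \<le> csmall \<mu> \<tau>"
  unfolding cinf_eq_Inf[OF assms] by (rule cInf_lower[OF _ bdd_below_csmall[OF assms]]) simp

lemma Cn_div_le:
  assumes "0 < \<mu>" "\<mu> < 1"
  shows "Cn \<mu> \<tau> / (1 + exp \<tau>) \<le> exp (- (1 - \<mu>) * \<tau>)"
proof -
  have "Cn \<mu> \<tau> / (1 + exp \<tau>) \<le> \<mu> * (1 + exp \<tau>) powr \<mu> / (1 + exp \<tau>)"
    using Cn_le[OF assms(1)] by (simp add: add_pos_pos divide_right_mono)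
  also have "\<dots> = \<mu> * (1 + exp \<tau>) powr (\<mu> - 1)"
    by (simp add: powr_diff add_pos_pos order.strict_implies_not_eq[symmetric])
  also have "\<dots> \<le> (1 + exp \<tau>) powr (\<mu> - 1)"
    using assms by (intro mult_left_le_one_le) auto
  also have "\<dots> \<le> exp \<tau> powr (\<mu> - 1)"
    using assms by (intro powr_mono2') auto
  also have "\<dots> = exp (- (1 - \<mu>) * \<tau>)"
    by (simp add: powr_def algebra_simps)
  finally show ?thesis .
qed

lemma Cn_div_ge:
  assumes "0 < \<mu>"
  shows "cinf \<mu> / (1 + exp (- \<tau>)) * exp (- (1 - \<mu>) * \<tau>) \<le> Cn \<mu> \<tau> / (1 + exp \<tau>)"
proof -
  have "cinf \<mu> / (1 + exp (- \<tau>)) * exp (- (1 - \<mu>) * \<tau>) = cinf \<mu> * exp (\<mu> * \<tau>) / (1 + exp \<tau>)"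
    by (simp add: exp_minus exp_diff algebra_simps field_simps add_pos_pos)
  also have "\<dots> \<le> csmall \<mu> \<tau> * exp (\<mu> * \<tau>) / (1 + exp \<tau>)"
    using cinf_le_csmall[OF assms] by (intro divide_right_mono mult_right_mono) (auto simp: add_pos_pos)
  also have "\<dots> = Cn \<mu> \<tau> / (1 + exp \<tau>)"
    by (simp add: csmall_def exp_minus)
  finally show ?thesis .
qed

theorem lemma6:
  fixes \<mu> \<tau> :: real
  assumes "0 < \<mu>" "\<mu> < 1" "0 \<le> \<tau>"
  shows "- 4 * exp (- (1 - \<mu>) * \<tau>) \<le> Cn \<mu> \<tau> * delta \<mu> \<tau>
       \<and> Cn \<mu> \<tau> * delta \<mu> \<tau> \<le> - (cinf \<mu> / (1 + exp (- \<tau>))) * exp (- (1 - \<mu>) * \<tau>)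
       \<and> - (cinf \<mu> / (1 + exp (- \<tau>))) * exp (- (1 - \<mu>) * \<tau>) \<le> 0"
proof -
  have "Cn \<mu> \<tau> * delta \<mu> \<tau> = - (Cn \<mu> \<tau> / (1 + exp \<tau>))"
    by (simp add: delta_eq[OF assms(1)])
  moreover have "0 \<le> cinf \<mu> / (1 + exp (- \<tau>)) * exp (- (1 - \<mu>) * \<tau>)"
    using cinf_nonneg[OF assms(1)] by (simp add: add_pos_pos)
  ultimately show ?thesis
    using Cn_div_le[OF assms(1,2), of \<tau>] Cn_div_ge[OF assms(1), of \<tau>]
      exp_gt_zero[of "- (1 - \<mu>) * \<tau>"]
    by auto
qed

end
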